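(* $\mathsf{Seq}\vdash\exists y\,\forall x\,\neg\exists v_1v_2\,[\,(v_1\vdash x)\circ v_2=y\,]$.
   Context: $\mathsf{Seq}$ is the theory in the language $\{e,\vdash,\circ\}$ ($e$ constant, $\vdash$ and $\circ$ binary functions) with axioms: ($\mathsf{Seq}_1$) $\forall xy[x\vdash y\neq e]$; ($\mathsf{Seq}_2$) $\forall x_1x_2y_1y_2[x_1\vdash x_2=y_1\vdash y_2\rightarrow(x_1=y_1\wedge x_2=y_2)]$; ($\mathsf{Seq}_3$) $\forall x[x\circ e=x]$; ($\mathsf{Seq}_4$) $\forall xyz[x\circ(y\vdash z)=(x\circ y)\vdash z]$; ($\mathsf{Seq}_5$) $\forall x[x=e\vee\exists yz[x=y\vdash z]]$. The claimed sentence is the translation of the empty-set axiom $\exists y\forall x[x\notin y]$ of adjunctive set theory under the translation $(x\in y)^\tau=\exists v_1v_2[(v_1\vdash x)\circ v_2=y]$. *)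

theory Defs
  imports Main
begin

text \<open>A structure (e, pair = the binary function written with a turnstile, cmp = the
binary function written with a circle) on a carrier type 'a is a model of the theory Seq
iff it satisfies the axioms Seq1--Seq5.\<close>

definition Seq_model :: "'a \<Rightarrow> ('a \<Rightarrow> 'a \<Rightarrow> 'a) \<Rightarrow> ('a \<Rightarrow> 'a \<Rightarrow> 'a) \<Rightarrow> bool" where
  "Seq_model e pair cmp \<longleftrightarrow>
     (\<forall>x y. pair x y \<noteq> e) \<and>
     (\<forall>x1 x2 y1 y2. pair x1 x2 = pair y1 y2 \<longrightarrow> x1 = y1 \<and> x2 = y2) \<and>
     (\<forall>x. cmp x e = x) \<and>
     (\<forall>x y z. cmp x (pair y z) = pair (cmp x y) z) \<and>
     (\<forall>x. x = e \<or> (\<exists>y z. x = pair y z))"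

end

theory Submission
  imports Defs
begin

lemma Seq_model_cmp_eq_e_iff:
  assumes "Seq_model e pair cmp"
  shows "cmp x y = e \<longleftrightarrow> x = e \<and> y = e"
proof -
  from assms have pair_neq_e: "\<And>a b. pair a b \<noteq> e"
    and cmp_e: "\<And>a. cmp a e = a"
    and cmp_pair: "\<And>a b c. cmp a (pair b c) = pair (cmp a b) c"
    and e_or_pair: "\<And>a. a = e \<or> (\<exists>b c. a = pair b c)"
    unfolding Seq_model_def by blast+
  consider "y = e" | b c where "y = pair b c"
    using e_or_pair by blast
  then show ?thesis
  proof cases
    case 1
    then show ?thesis by (simp add: cmp_e)
  next
    case 2
    then show ?thesis by (simp add: cmp_pair pair_neq_e)
  qed
qed

theorem lemma3:
  fixes e :: 'a and pair cmp :: "'a \<Rightarrow> 'a \<Rightarrow> 'a"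
  assumes "Seq_model e pair cmp"
  shows "\<exists>y. \<forall>x. \<not> (\<exists>v1 v2. cmp (pair v1 x) v2 = y)"
proof (intro exI[of _ e] allI notI, elim exE)
  fix x v1 v2
  assume "cmp (pair v1 x) v2 = e"
  then have "pair v1 x = e"
    using Seq_model_cmp_eq_e_iff[OF assms] by blast
  moreover have "pair v1 x \<noteq> e"
    using assms unfolding Seq_model_def by blast
  ultimately show False by contradiction
qed

end
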